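(* Let $A,B,C,D\in\mathcal{B}(\mathcal{H})$. Then for all $r\geq1$, $$w^{r}\left(\begin{bmatrix}A&B\\C&D\end{bmatrix}\right)\leq 4^{r-1}\,w\left(\begin{bmatrix}w^r(A)&\|B\|^r\\ \|C\|^r&w^r(D)\end{bmatrix}\right),$$ where on the right $w$ is the numerical radius of a $2\times2$ complex matrix acting on $\mathbb{C}^2$.
   Context: $\mathcal{H}$ is a complex Hilbert space, $\mathcal{B}(\mathcal{H})$ the bounded linear operators on it, and $w(T)=\sup\{|\langle Tz,z\rangle|:\|z\|=1\}$ the numerical radius (on any Hilbert space). The operator matrix $\begin{bmatrix}A&B\\C&D\end{bmatrix}$ acts on $\mathcal{H}\oplus\mathcal{H}$ by $(x,y)\mapsto(Ax+By,Cx+Dy)$. *)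

theory Defs
  imports "HOL-Analysis.Analysis"
begin

text \<open>The inner product is linear in the
  first argument and conjugate-linear in the second.\<close>

class complex_inner = ab_group_add +
  fixes scaleC :: "complex \<Rightarrow> 'a \<Rightarrow> 'a" (infixr "*\<^sub>C" 75)
    and cinner :: "'a \<Rightarrow> 'a \<Rightarrow> complex"
  assumes scaleC_add_right: "a *\<^sub>C (x + y) = a *\<^sub>C x + a *\<^sub>C y"
    and scaleC_add_left: "(a + b) *\<^sub>C x = a *\<^sub>C x + b *\<^sub>C x"
    and scaleC_scaleC: "a *\<^sub>C (b *\<^sub>C x) = (a * b) *\<^sub>C x"
    and scaleC_one: "1 *\<^sub>C x = x"
    and cinner_add_left: "cinner (x + y) z = cinner x z + cinner y z"
    and cinner_scaleC_left: "cinner (a *\<^sub>C x) y = a * cinner x y"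
    and cinner_commute: "cinner y x = cnj (cinner x y)"
    and cinner_ge_zero: "0 \<le> Re (cinner x x)"
    and cinner_eq_zero_iff: "cinner x x = 0 \<longleftrightarrow> x = 0"

definition cnorm :: "'a::complex_inner \<Rightarrow> real" where
  "cnorm x = sqrt (Re (cinner x x))"

class complex_hilbert = complex_inner +
  assumes complete:
    "(\<forall>e>0. \<exists>N::nat. \<forall>m\<ge>N. \<forall>n\<ge>N. sqrt (Re (cinner (X m - X n) (X m - X n))) < e)
      \<Longrightarrow> \<exists>L. \<forall>e>0. \<exists>N::nat. \<forall>n\<ge>N. sqrt (Re (cinner (X n - L) (X n - L))) < e"

definition bounded_op :: "('a::complex_inner \<Rightarrow> 'a) \<Rightarrow> bool" where
  "bounded_op T \<longleftrightarrow> (\<forall>x y. T (x + y) = T x + T y) \<and> (\<forall>c x. T (c *\<^sub>C x) = c *\<^sub>C T x)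
     \<and> (\<exists>K. \<forall>x. cnorm (T x) \<le> K * cnorm x)"

definition opnorm :: "('a::complex_inner \<Rightarrow> 'a) \<Rightarrow> real" where
  "opnorm T = Sup {cnorm (T x) | x. cnorm x = 1}"

definition numrad :: "('v \<Rightarrow> 'v \<Rightarrow> complex) \<Rightarrow> ('v \<Rightarrow> 'v) \<Rightarrow> real" where
  "numrad ip T = Sup {cmod (ip (T z) z) | z. ip z z = 1}"

definition w :: "('a::complex_inner \<Rightarrow> 'a) \<Rightarrow> real" where
  "w T = numrad cinner T"

definition sum_inner :: "'a::complex_inner \<times> 'a \<Rightarrow> 'a \<times> 'a \<Rightarrow> complex" where
  "sum_inner p q = cinner (fst p) (fst q) + cinner (snd p) (snd q)"

definition opmat :: "('a::complex_inner \<Rightarrow> 'a) \<Rightarrow> ('a \<Rightarrow> 'a) \<Rightarrow> ('a \<Rightarrow> 'a) \<Rightarrow> ('a \<Rightarrow> 'a)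
    \<Rightarrow> 'a \<times> 'a \<Rightarrow> 'a \<times> 'a" where
  "opmat A B C D p = (A (fst p) + B (snd p), C (fst p) + D (snd p))"

definition w2 :: "('a::complex_inner \<times> 'a \<Rightarrow> 'a \<times> 'a) \<Rightarrow> real" where
  "w2 T = numrad sum_inner T"

definition c2_inner :: "complex \<times> complex \<Rightarrow> complex \<times> complex \<Rightarrow> complex" where
  "c2_inner p q = fst p * cnj (fst q) + snd p * cnj (snd q)"

definition cmat2 :: "complex \<Rightarrow> complex \<Rightarrow> complex \<Rightarrow> complex
    \<Rightarrow> complex \<times> complex \<Rightarrow> complex \<times> complex" where
  "cmat2 a b c d p = (a * fst p + b * snd p, c * fst p + d * snd p)"

definition wmat2 :: "complex \<Rightarrow> complex \<Rightarrow> complex \<Rightarrow> complex \<Rightarrow> real" where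
  "wmat2 a b c d = numrad c2_inner (cmat2 a b c d)"

end

theory Submission
  imports Defs
begin

text \<open>For a unit vector z = (x, y) of H \<oplus> H put a = ||x|| and b = ||y||. The triangle and
  Cauchy-Schwarz inequalities give |<Tz, z>| \<le> w(A) a^2 + ||B|| a b + ||C|| a b + w(D) b^2.
  By convexity of t \<mapsto> t^r, the r-th power of this sum of four terms is at most 4^(r-1) times
  the sum of their r-th powers, which is the quadratic form of the nonnegative matrix
  [w(A)^r, ||B||^r; ||C||^r, w(D)^r] at v = (a^r, b^r). Hence it is at most the numerical radius
  of that matrix times ||v||^2 = a^(2r) + b^(2r), and r \<ge> 1 gives ||v||^2 \<le> a^2 + b^2 = 1.\<close>

lemma cinner_self_eq_Re: "cinner x x = complex_of_real (Re (cinner (x::'a::complex_inner) x))"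
  using cinner_commute[of x x] by (simp add: complex_eq_iff)

text \<open>With \<complex> and products of complex inner product spaces made instances of the class,
  \<^const>\<open>sum_inner\<close> and \<^const>\<open>c2_inner\<close> become \<^const>\<open>cinner\<close>, so the facts about
  numerical radii below apply to H \<oplus> H and \<complex> \<times> \<complex> as well as to H.\<close>

instantiation complex :: complex_inner
begin

definition scaleC_complex_def: "a *\<^sub>C x = a * (x::complex)"

definition cinner_complex_def: "cinner x y = x * cnj (y::complex)"

instance
  by standard (simp_all add: scaleC_complex_def cinner_complex_def algebra_simps)

end

instantiation prod :: (complex_inner, complex_inner) complex_inner
begin

definition scaleC_prod_def: "a *\<^sub>C p = (a *\<^sub>C fst p, a *\<^sub>C snd p)"

definition cinner_prod_def: "cinner p q = cinner (fst p) (fst q) + cinner (snd p) (snd q)"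

instance
proof
  fix p q :: "'a \<times> 'b"
  show "cinner q p = cnj (cinner p q)"
    by (simp add: cinner_prod_def cinner_commute[of "fst p"] cinner_commute[of "snd p"])
  show "cinner p p = 0 \<longleftrightarrow> p = 0"
  proof
    assume "cinner p p = 0"
    then have "Re (cinner (fst p) (fst p)) = 0 \<and> Re (cinner (snd p) (snd p)) = 0"
      using cinner_ge_zero[of "fst p"] cinner_ge_zero[of "snd p"]
      by (simp add: cinner_prod_def complex_eq_iff add_nonneg_eq_0_iff)
    then show "p = 0"
      by (metis cinner_eq_zero_iff cinner_self_eq_Re of_real_0 prod_eq_iff fst_zero snd_zero)
  qed (simp add: cinner_prod_def cinner_eq_zero_iff[THEN iffD2])
qed (auto simp: scaleC_prod_def cinner_prod_def prod_eq_iff scaleC_add_right scaleC_add_left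
       scaleC_scaleC scaleC_one cinner_add_left cinner_scaleC_left algebra_simps
       intro: add_nonneg_nonneg cinner_ge_zero)

end

lemma cinner_zero_left [simp]: "cinner (0::'a::complex_inner) y = 0"
  using cinner_add_left[of 0 0 y] by simp

lemma cinner_zero_right [simp]: "cinner (x::'a::complex_inner) 0 = 0"
  by (metis cinner_commute cinner_zero_left complex_cnj_zero)

lemma cinner_diff_left: "cinner (x - z) (y::'a::complex_inner) = cinner x y - cinner z y"
  using cinner_add_left[of "x - z" z y] by (simp add: algebra_simps)

lemma cinner_diff_right: "cinner x (y - z) = cinner x y - cinner (x::'a::complex_inner) z"
  by (metis cinner_commute cinner_diff_left complex_cnj_diff)

lemma cinner_scaleC_right: "cinner x (a *\<^sub>C y) = cnj a * cinner (x::'a::complex_inner) y"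
  by (metis cinner_commute cinner_scaleC_left complex_cnj_mult)

lemma cnorm_nonneg: "0 \<le> cnorm x"
  by (simp add: cnorm_def cinner_ge_zero)

lemma cinner_self_eq_cnorm: "cinner x x = complex_of_real (cnorm (x::'a::complex_inner) ^ 2)"
  by (subst cinner_self_eq_Re) (simp add: cnorm_def cinner_ge_zero)

lemma cnorm_eq_zero_iff [simp]: "cnorm (x::'a::complex_inner) = 0 \<longleftrightarrow> x = 0"
  by (metis cinner_eq_zero_iff cinner_self_eq_cnorm of_real_eq_0_iff zero_eq_power2)

lemma cnorm_zero [simp]: "cnorm 0 = 0"
  by simp

lemma cnorm_pos_iff: "0 < cnorm x \<longleftrightarrow> x \<noteq> 0"
  using cnorm_nonneg[of x] by (simp add: order_less_le)

lemma cinner_self_eq_1_iff: "cinner z z = 1 \<longleftrightarrow> cnorm (z::'a::complex_inner) = 1"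
  using cnorm_nonneg[of z] by (simp add: cinner_self_eq_cnorm power2_eq_1_iff del: of_real_power)

lemma cnorm_scaleC: "cnorm (a *\<^sub>C (x::'a::complex_inner)) = cmod a * cnorm x"
proof -
  have "complex_of_real (cnorm (a *\<^sub>C x) ^ 2) = cinner (a *\<^sub>C x) (a *\<^sub>C x)"
    by (rule cinner_self_eq_cnorm[symmetric])
  also have "\<dots> = (a * cnj a) * cinner x x"
    by (simp add: cinner_scaleC_left cinner_scaleC_right)
  also have "\<dots> = complex_of_real ((cmod a * cnorm x) ^ 2)"
    by (simp only: cinner_self_eq_cnorm power_mult_distrib of_real_mult flip: complex_norm_square)
  finally have "cnorm (a *\<^sub>C x) ^ 2 = (cmod a * cnorm x) ^ 2"
    by (simp only: of_real_eq_iff)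
  then show ?thesis
    by (simp add: power2_eq_iff_nonneg cnorm_nonneg)
qed

lemma Cauchy_Schwarz_cinner: "cmod (cinner x y) \<le> cnorm x * cnorm (y::'a::complex_inner)"
proof (cases "y = 0")
  case False
  define c where "c = cnorm y ^ 2"
  define g where "g = cinner x y"
  define t where "t = g / complex_of_real c"
  have c: "c > 0"
    using False cnorm_nonneg[of y] by (simp add: c_def)
  have "0 \<le> Re (cinner (x - t *\<^sub>C y) (x - t *\<^sub>C y))"
    by (rule cinner_ge_zero)
  also have "cinner (x - t *\<^sub>C y) (x - t *\<^sub>C y)
      = cinner x x - cnj t * g - t * cnj g + t * cnj t * complex_of_real c"
    by (simp add: cinner_diff_left cinner_diff_right cinner_scaleC_left cinner_scaleC_right
        c_def g_def cinner_self_eq_cnorm[of y] cinner_commute[of x y] algebra_simps)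
  also have "\<dots> = cinner x x - complex_of_real (cmod g ^ 2 / c)"
    using c by (simp add: t_def field_simps power2_eq_square flip: complex_norm_square)
  finally have "cmod g ^ 2 \<le> (cnorm x * cnorm y) ^ 2"
    using c by (simp add: cinner_self_eq_cnorm c_def power_mult_distrib field_simps del: of_real_power)
  then show ?thesis
    unfolding g_def by (rule power2_le_imp_le) (simp add: cnorm_nonneg)
qed (simp add: cnorm_def)

lemma scaleC_unit_decomp:
  assumes "(x::'a::complex_inner) \<noteq> 0"
  obtains u where "cnorm u = 1" and "x = complex_of_real (cnorm x) *\<^sub>C u"
proof
  show "cnorm (complex_of_real (1 / cnorm x) *\<^sub>C x) = 1"
    using assms cnorm_nonneg[of x] by (simp add: cnorm_scaleC norm_divide)
  show "x = complex_of_real (cnorm x) *\<^sub>C (complex_of_real (1 / cnorm x) *\<^sub>C x)"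
    using assms by (simp add: scaleC_scaleC scaleC_one flip: of_real_mult)
qed

lemma exists_unit_vector:
  assumes "\<exists>x::'a::complex_inner. x \<noteq> 0"
  shows "\<exists>u::'a. cinner u u = 1"
  using assms scaleC_unit_decomp by (metis cinner_self_eq_1_iff)

lemma bounded_op_zero: "bounded_op T \<Longrightarrow> T 0 = 0"
  unfolding bounded_op_def by (metis add_cancel_right_left add_0)

lemma bounded_op_scaleC: "bounded_op T \<Longrightarrow> T (c *\<^sub>C x) = c *\<^sub>C T x"
  unfolding bounded_op_def by blast

lemma bdd_above_opnorm_set:
  assumes "bounded_op T"
  shows "bdd_above {cnorm (T x) | x. cnorm x = 1}"
proof -
  obtain K where K: "\<And>x. cnorm (T x) \<le> K * cnorm x"
    using assms unfolding bounded_op_def by blast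
  show ?thesis
  proof (rule bdd_aboveI[of _ K], clarify)
    fix x :: 'a
    assume "cnorm x = 1"
    then show "cnorm (T x) \<le> K"
      using K[of x] by simp
  qed
qed

lemma cnorm_op_le:
  assumes "bounded_op T"
  shows "cnorm (T x) \<le> opnorm T * cnorm x"
proof (cases "x = 0")
  case False
  then obtain u where u: "cnorm u = 1" and x: "x = complex_of_real (cnorm x) *\<^sub>C u"
    by (rule scaleC_unit_decomp)
  have "cnorm (T u) \<le> opnorm T"
    unfolding opnorm_def using bdd_above_opnorm_set[OF assms] u by (intro cSup_upper) auto
  moreover have "cnorm (T x) = cnorm x * cnorm (T u)"
    by (subst x) (simp add: bounded_op_scaleC[OF assms] cnorm_scaleC cnorm_nonneg)
  ultimately show ?thesis
    by (simp add: cnorm_nonneg mult_left_mono mult.commute)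
qed (simp add: bounded_op_zero[OF assms])

lemma opnorm_nonneg:
  assumes "bounded_op (T::'a::complex_inner \<Rightarrow> 'a)" and "\<exists>x::'a. x \<noteq> 0"
  shows "0 \<le> opnorm T"
proof -
  obtain x :: 'a where "x \<noteq> 0"
    using assms(2) by blast
  then have "0 < cnorm x"
    by (simp add: cnorm_pos_iff)
  moreover have "0 \<le> opnorm T * cnorm x"
    using cnorm_op_le[OF assms(1)] cnorm_nonneg order_trans by blast
  ultimately show ?thesis
    by (simp add: zero_le_mult_iff)
qed

lemma numrad_powr_le:
  assumes "0 < r" and "\<exists>z. ip z z = 1"
    and "\<And>z. ip z z = 1 \<Longrightarrow> cmod (ip (T z) z) powr r \<le> K"
  shows "numrad ip T powr r \<le> K"
proof -
  let ?S = "{cmod (ip (T z) z) | z. ip z z = 1}"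
  have bound: "s \<le> K powr (1 / r)" if "s \<in> ?S" for s
  proof -
    obtain z where s: "s = cmod (ip (T z) z)" and z: "ip z z = 1"
      using \<open>s \<in> ?S\<close> by blast
    have "s = (s powr r) powr (1 / r)"
      using \<open>0 < r\<close> by (simp add: s powr_powr)
    also have "\<dots> \<le> K powr (1 / r)"
      using assms(1) assms(3)[OF z] by (simp add: s powr_mono2)
    finally show ?thesis .
  qed
  obtain z where z: "ip z z = 1"
    using assms(2) by blast
  then have "cmod (ip (T z) z) \<in> ?S"
    by blast
  then have "0 \<le> numrad ip T"
    unfolding numrad_def using bound by (meson bdd_aboveI cSup_upper norm_ge_zero order_trans)
  moreover have "numrad ip T \<le> K powr (1 / r)"
    unfolding numrad_def using bound z by (intro cSup_least) auto
  moreover have "0 \<le> K"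
    using assms(3)[OF z] by (meson order_trans powr_ge_zero)
  ultimately have "numrad ip T powr r \<le> (K powr (1 / r)) powr r"
    using \<open>0 < r\<close> by (simp add: powr_mono2)
  also have "\<dots> = K"
    using \<open>0 < r\<close> \<open>0 \<le> K\<close> by (simp add: powr_powr)
  finally show ?thesis .
qed

lemma bdd_above_numrad_set:
  assumes "bounded_op (T::'a::complex_inner \<Rightarrow> 'a)"
  shows "bdd_above {cmod (cinner (T z) z) | z. cinner z z = 1}"
proof (rule bdd_aboveI[of _ "opnorm T"], clarify)
  fix z :: 'a
  assume "cinner z z = 1"
  then have "cnorm z = 1"
    by (simp add: cinner_self_eq_1_iff)
  then show "cmod (cinner (T z) z) \<le> opnorm T"
    using Cauchy_Schwarz_cinner[of "T z" z] cnorm_op_le[OF assms, of z] by simp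
qed

lemma cmod_cinner_op_le_numrad:
  assumes "bounded_op (T::'a::complex_inner \<Rightarrow> 'a)"
  shows "cmod (cinner (T x) x) \<le> numrad cinner T * cnorm x ^ 2"
proof (cases "x = 0")
  case False
  then obtain u where u: "cnorm u = 1" and x: "x = complex_of_real (cnorm x) *\<^sub>C u"
    by (rule scaleC_unit_decomp)
  have "cmod (cinner (T u) u) \<le> numrad cinner T"
    unfolding numrad_def using bdd_above_numrad_set[OF assms] u
    by (intro cSup_upper) (auto simp: cinner_self_eq_1_iff)
  moreover have "cmod (cinner (T x) x) = cnorm x ^ 2 * cmod (cinner (T u) u)"
    by (subst (1 2) x) (simp add: bounded_op_scaleC[OF assms] cinner_scaleC_left
        cinner_scaleC_right norm_mult power2_eq_square cnorm_nonneg)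
  ultimately show ?thesis
    by (metis mult.commute mult_right_mono zero_le_power2)
qed (simp add: bounded_op_zero[OF assms])

lemma numrad_nonneg:
  assumes "bounded_op (T::'a::complex_inner \<Rightarrow> 'a)" and "\<exists>x::'a. x \<noteq> 0"
  shows "0 \<le> numrad cinner T"
proof -
  obtain u :: 'a where "cnorm u = 1"
    using exists_unit_vector[OF assms(2)] cinner_self_eq_1_iff by blast
  then show ?thesis
    using cmod_cinner_op_le_numrad[OF assms(1), of u] by (metis mult_1_right norm_ge_zero
        order_trans power_one)
qed

lemma powr_le_self: "0 \<le> x \<Longrightarrow> x \<le> 1 \<Longrightarrow> 1 \<le> p \<Longrightarrow> x powr p \<le> (x::real)"
  using powr_mono'[of 1 p x] by simp

lemma power2_powr_add_le_one:
  fixes a b r :: real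
  assumes "0 \<le> a" "0 \<le> b" "a\<^sup>2 + b\<^sup>2 = 1" and "1 \<le> r"
  shows "(a powr r)\<^sup>2 + (b powr r)\<^sup>2 \<le> 1"
proof -
  have "a\<^sup>2 \<le> 1" "b\<^sup>2 \<le> 1"
    using assms(3) zero_le_power2[of a] zero_le_power2[of b] by linarith+
  then have "a \<le> 1" "b \<le> 1"
    by (metis one_power2 power2_le_imp_le zero_le_one)+
  then have "(a powr r)\<^sup>2 \<le> a\<^sup>2" "(b powr r)\<^sup>2 \<le> b\<^sup>2"
    using assms powr_le_self[of a r] powr_le_self[of b r] by (auto intro: power_mono)
  then show ?thesis
    using assms(3) by linarith
qed

lemma convex_on_powr_nonneg:
  assumes "1 \<le> p"
  shows "convex_on {0..} (\<lambda>x::real. x powr p)"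
proof (rule convex_on_linorderI)
  fix t x y :: real
  assume t: "0 < t" "t < 1" and xy: "x \<in> {0..}" "y \<in> {0..}" "x < y"
  show "((1 - t) *\<^sub>R x + t *\<^sub>R y) powr p \<le> (1 - t) * x powr p + t * y powr p"
  proof (cases "x = 0")
    case True
    have "(t * y) powr p = t powr p * y powr p"
      using t xy by (simp add: powr_mult)
    also have "\<dots> \<le> t * y powr p"
      using t assms by (intro mult_right_mono powr_le_self) auto
    finally show ?thesis
      using True assms by simp
  next
    case False
    then show ?thesis
      using convex_onD[OF powr_convex[OF assms], of t x y] t xy by simp
  qed
qed (simp add: convex_real_interval)

lemma powr_sum_le_card_powr_sum:
  fixes f :: "'i \<Rightarrow> real"
  assumes "finite I" and "\<And>i. i \<in> I \<Longrightarrow> 0 \<le> f i" and "1 \<le> p"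
  shows "(\<Sum>i\<in>I. f i) powr p \<le> card I powr (p - 1) * (\<Sum>i\<in>I. f i powr p)"
proof (cases "I = {}")
  case False
  define n where "n = real (card I)"
  have n: "0 < n"
    using assms(1) False by (simp add: n_def card_gt_0_iff)
  have "((\<Sum>i\<in>I. f i) / n) powr p = (\<Sum>i\<in>I. (1 / n) *\<^sub>R f i) powr p"
    by (simp add: sum_divide_distrib)
  also have "\<dots> \<le> (\<Sum>i\<in>I. 1 / n * f i powr p)"
    using assms n by (intro convex_on_sum[OF _ False convex_on_powr_nonneg]) (auto simp: n_def)
  finally have "(\<Sum>i\<in>I. f i) powr p / n powr p \<le> (\<Sum>i\<in>I. f i powr p) / n"
    using n by (simp add: powr_divide flip: sum_divide_distrib)
  then have "(\<Sum>i\<in>I. f i) powr p \<le> n powr p / n * (\<Sum>i\<in>I. f i powr p)"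
    using n by (simp add: field_simps)
  then show ?thesis
    using n by (simp add: n_def powr_diff)
qed (use assms(3) in simp)

lemma powr_add4_le:
  fixes a b c d :: real
  assumes "0 \<le> a" "0 \<le> b" "0 \<le> c" "0 \<le> d" and "1 \<le> p"
  shows "(a + b + c + d) powr p \<le> 4 powr (p - 1) * (a powr p + b powr p + c powr p + d powr p)"
proof -
  have "(\<Sum>i<4. [a, b, c, d] ! i) powr p \<le> card {..<4::nat} powr (p - 1) * (\<Sum>i<4. ([a, b, c, d] ! i) powr p)"
    using assms by (intro powr_sum_le_card_powr_sum) (auto simp: numeral_eq_Suc less_Suc_eq)
  then show ?thesis
    by (simp add: numeral_eq_Suc lessThan_Suc add_ac)
qed

lemma sum_inner_eq_cinner: "sum_inner = cinner"
  by (simp add: fun_eq_iff sum_inner_def cinner_prod_def)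

lemma c2_inner_eq_cinner: "c2_inner = cinner"
  by (simp add: fun_eq_iff c2_inner_def cinner_prod_def cinner_complex_def)

lemma cnorm_complex [simp]: "cnorm z = cmod z"
  by (simp add: cnorm_def cinner_complex_def complex_mult_cnj cmod_def)

lemma cnorm_Pair_sq: "cnorm (x, y) ^ 2 = cnorm x ^ 2 + cnorm y ^ 2"
  by (simp add: cnorm_def cinner_prod_def cinner_ge_zero add_nonneg_nonneg)

lemma cnorm_Pair_le: "cnorm (x, y) \<le> cnorm x + cnorm y"
proof (rule power2_le_imp_le)
  show "cnorm (x, y) ^ 2 \<le> (cnorm x + cnorm y) ^ 2"
    using cnorm_nonneg[of x] cnorm_nonneg[of y] by (simp add: cnorm_Pair_sq power2_sum)
qed (simp add: cnorm_nonneg)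

lemma cnorm_fst_le: "cnorm (fst z) \<le> cnorm z"
  and cnorm_snd_le: "cnorm (snd z) \<le> cnorm z"
  using cnorm_Pair_sq[of "fst z" "snd z"]
  by (simp_all add: cnorm_nonneg power2_le_imp_le)

lemma bounded_op_cmat2: "bounded_op (cmat2 a b c d)"
  unfolding bounded_op_def
proof (intro conjI allI exI)
  fix v :: "complex \<times> complex"
  have "cnorm (cmat2 a b c d v) \<le> cmod (a * fst v + b * snd v) + cmod (c * fst v + d * snd v)"
    using cnorm_Pair_le[of "a * fst v + b * snd v" "c * fst v + d * snd v"] by (simp add: cmat2_def)
  also have "\<dots> \<le> (cmod a + cmod b) * cnorm v + (cmod c + cmod d) * cnorm v"
    using cnorm_fst_le[of v] cnorm_snd_le[of v]
    by (intro add_mono norm_triangle_le) (auto simp: norm_mult distrib_right intro!: add_mono mult_left_mono)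
  finally show "cnorm (cmat2 a b c d v) \<le> (cmod a + cmod b + cmod c + cmod d) * cnorm v"
    by (simp add: algebra_simps)
qed (simp_all add: cmat2_def scaleC_prod_def scaleC_complex_def algebra_simps)

lemma wmat2_nonneg: "0 \<le> wmat2 a b c d"
  unfolding wmat2_def c2_inner_eq_cinner
  by (rule numrad_nonneg[OF bounded_op_cmat2]) (auto simp: zero_prod_def intro: exI[of _ "(1, 0)"])

lemma nonneg_quadratic_form_le_wmat2:
  fixes \<alpha> \<beta> \<gamma> \<delta> p q :: real
  assumes "0 \<le> \<alpha>" "0 \<le> \<beta>" "0 \<le> \<gamma>" "0 \<le> \<delta>" "0 \<le> p" "0 \<le> q"
  shows "\<alpha> * p\<^sup>2 + \<beta> * p * q + \<gamma> * p * q + \<delta> * q\<^sup>2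
    \<le> wmat2 (complex_of_real \<alpha>) (complex_of_real \<beta>) (complex_of_real \<gamma>) (complex_of_real \<delta>)
        * (p\<^sup>2 + q\<^sup>2)"
proof -
  let ?M = "cmat2 (complex_of_real \<alpha>) (complex_of_real \<beta>) (complex_of_real \<gamma>) (complex_of_real \<delta>)"
  let ?v = "(complex_of_real p, complex_of_real q)"
  let ?Q = "\<alpha> * p\<^sup>2 + \<beta> * p * q + \<gamma> * p * q + \<delta> * q\<^sup>2"
  have "cinner (?M ?v) ?v = complex_of_real ?Q"
    by (simp add: cmat2_def cinner_prod_def cinner_complex_def power2_eq_square algebra_simps)
  moreover have "0 \<le> ?Q"
    using assms by (intro add_nonneg_nonneg mult_nonneg_nonneg) auto
  ultimately have "?Q = cmod (cinner (?M ?v) ?v)"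
    by (metis abs_of_nonneg norm_of_real)
  also have "\<dots> \<le> numrad cinner ?M * cnorm ?v ^ 2"
    by (rule cmod_cinner_op_le_numrad[OF bounded_op_cmat2])
  finally show ?thesis
    by (simp add: wmat2_def c2_inner_eq_cinner cnorm_Pair_sq)
qed

lemma cmod_cinner_opmat_le:
  assumes A: "bounded_op A" and B: "bounded_op B" and C: "bounded_op C" and D: "bounded_op D"
  shows "cmod (cinner (opmat A B C D (x, y)) (x, y))
    \<le> w A * cnorm x ^ 2 + opnorm B * cnorm x * cnorm y + opnorm C * cnorm x * cnorm y
       + w D * cnorm y ^ 2"
proof -
  have "cmod (cinner (opmat A B C D (x, y)) (x, y))
      \<le> cmod (cinner (A x) x) + cmod (cinner (B y) x) + cmod (cinner (C x) y) + cmod (cinner (D y) y)"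
    unfolding opmat_def cinner_prod_def by (simp add: cinner_add_left add.assoc)
      (meson add_mono norm_triangle_ineq order_refl order_trans)
  also have "\<dots> \<le> w A * cnorm x ^ 2 + opnorm B * cnorm y * cnorm x + opnorm C * cnorm x * cnorm y
       + w D * cnorm y ^ 2"
    using cmod_cinner_op_le_numrad[OF A, of x] cmod_cinner_op_le_numrad[OF D, of y]
      Cauchy_Schwarz_cinner[of "B y" x] Cauchy_Schwarz_cinner[of "C x" y]
      cnorm_op_le[OF B, of y] cnorm_op_le[OF C, of x] cnorm_nonneg[of x] cnorm_nonneg[of y]
    unfolding w_def
    by (intro add_mono) (auto elim!: order_trans intro!: mult_right_mono)
  finally show ?thesis
    by (simp add: mult_ac)
qed

lemma cmod_cinner_opmat_powr_le:
  fixes A B C D :: "'a::complex_inner \<Rightarrow> 'a" and r :: real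
  assumes "\<exists>x::'a. x \<noteq> 0"
    and A: "bounded_op A" and B: "bounded_op B" and C: "bounded_op C" and D: "bounded_op D"
    and r: "1 \<le> r" and z: "cnorm z = 1"
  shows "cmod (cinner (opmat A B C D z) z) powr r
    \<le> 4 powr (r - 1) * wmat2 (complex_of_real (w A powr r)) (complex_of_real (opnorm B powr r))
                             (complex_of_real (opnorm C powr r)) (complex_of_real (w D powr r))"
proof -
  obtain x y where xy: "z = (x, y)"
    by fastforce
  define a b where "a = cnorm x" and "b = cnorm y"
  have ab: "0 \<le> a" "0 \<le> b" "a\<^sup>2 + b\<^sup>2 = 1"
    using cnorm_Pair_sq[of x y] z by (simp_all add: a_def b_def xy cnorm_nonneg)
  have coeffs: "0 \<le> w A" "0 \<le> opnorm B" "0 \<le> opnorm C" "0 \<le> w D"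
    using numrad_nonneg opnorm_nonneg assms unfolding w_def by blast+
  have "cmod (cinner (opmat A B C D z) z) powr r
      \<le> (w A * a\<^sup>2 + opnorm B * a * b + opnorm C * a * b + w D * b\<^sup>2) powr r"
    using cmod_cinner_opmat_le[OF A B C D, of x y] r by (simp add: xy a_def b_def powr_mono2)
  also have "\<dots> \<le> 4 powr (r - 1) * ((w A * a\<^sup>2) powr r + (opnorm B * a * b) powr r
      + (opnorm C * a * b) powr r + (w D * b\<^sup>2) powr r)"
    using ab coeffs r by (intro powr_add4_le) auto
  also have "\<dots> = 4 powr (r - 1) * (w A powr r * (a powr r)\<^sup>2 + opnorm B powr r * a powr r * b powr r
      + opnorm C powr r * a powr r * b powr r + w D powr r * (b powr r)\<^sup>2)"
    using ab coeffs by (simp add: powr_mult power2_eq_square)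
  also have "\<dots> \<le> 4 powr (r - 1) * (wmat2 (complex_of_real (w A powr r))
      (complex_of_real (opnorm B powr r)) (complex_of_real (opnorm C powr r))
      (complex_of_real (w D powr r)) * ((a powr r)\<^sup>2 + (b powr r)\<^sup>2))"
    by (intro mult_left_mono nonneg_quadratic_form_le_wmat2) auto
  also have "\<dots> \<le> 4 powr (r - 1) * wmat2 (complex_of_real (w A powr r))
      (complex_of_real (opnorm B powr r)) (complex_of_real (opnorm C powr r))
      (complex_of_real (w D powr r))"
    using power2_powr_add_le_one[OF ab r] wmat2_nonneg
    by (intro mult_left_mono mult_right_le_one_le) auto
  finally show ?thesis .
qed

theorem theorem4p2:
  fixes A B C D :: "'a::complex_hilbert \<Rightarrow> 'a" and r :: real
  assumes "\<exists>x::'a. x \<noteq> 0"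
    and "bounded_op A" and "bounded_op B" and "bounded_op C" and "bounded_op D"
    and "r \<ge> 1"
  shows "w2 (opmat A B C D) powr r
    \<le> 4 powr (r - 1) * wmat2 (complex_of_real (w A powr r)) (complex_of_real (opnorm B powr r))
                             (complex_of_real (opnorm C powr r)) (complex_of_real (w D powr r))"
proof -
  obtain x :: 'a where "x \<noteq> 0"
    using assms(1) by blast
  then have "\<exists>z::'a \<times> 'a. cinner z z = 1"
    by (intro exists_unit_vector exI[of _ "(x, 0)"]) (simp add: zero_prod_def)
  then show ?thesis
    unfolding w2_def sum_inner_eq_cinner
    using assms(6) cmod_cinner_opmat_powr_le[OF assms] cinner_self_eq_1_iff
    by (intro numrad_powr_le) auto
qed

end
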